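(* Let $I_1,\dots,I_n$ be i.i.d. Bernoulli random variables with $\Pr[I_i=1]=p=1-q$, $0<q<1$, let $I_{n+1}=\prod_{j=1}^n(1-I_j)$, and let $P_i=I_i/\sum_{j=1}^{n+1}I_j$ for $i=1,\dots,n+1$. Let $\pi_1,\dots,\pi_n\ge0$ with $\pi_i>0$ for some $i$, and let $W_i=\big(\sum_{j=1}^{n}\pi_j\big)P_i+\pi_iP_{n+1}$ for $i=1,\dots,n$ (homogeneous tontine with passive administrator). Then $E[W_i]=\pi_i$ for all $i=1,\dots,n$ if and only if $\pi_1=\pi_2=\dots=\pi_n$. *)

theory Defs
  imports "HOL-Probability.Probability"
begin

text \<open>Outcomes: I :: nat \<Rightarrow> bool, where I j for j < n is the indicator I_(j+1)
  (0-based indexing). Index n plays the role of the paper's index n+1.\<close>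

definition tontine_Ilast :: "nat \<Rightarrow> (nat \<Rightarrow> bool) \<Rightarrow> real" where
  "tontine_Ilast n I = (\<Prod>j<n. 1 - of_bool (I j))"

definition tontine_P :: "nat \<Rightarrow> (nat \<Rightarrow> bool) \<Rightarrow> nat \<Rightarrow> real" where
  "tontine_P n I i =
     (if i = n then tontine_Ilast n I else of_bool (I i)) /
     ((\<Sum>j<n. of_bool (I j)) + tontine_Ilast n I)"

definition tontine_W :: "nat \<Rightarrow> (nat \<Rightarrow> real) \<Rightarrow> (nat \<Rightarrow> bool) \<Rightarrow> nat \<Rightarrow> real" where
  "tontine_W n \<pi> I i = (\<Sum>j<n. \<pi> j) * tontine_P n I i + \<pi> i * tontine_P n I n"

end

theory Submission
  imports Defs "HOL-Combinatorics.Transposition"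
begin

text \<open>The indicators are exchangeable, so \<open>E[P_1], ..., E[P_n]\<close> coincide, and since the
  \<open>P_i\<close> sum to one and \<open>E[P_(n+1)] = q^n\<close>, each of them equals \<open>(1 - q^n) / n\<close>. Writing
  \<open>S = \<Sum>\<pi>_j\<close>, this gives \<open>E[W_i] = S (1 - q^n) / n + \<pi>_i q^n\<close>, which equals \<open>\<pi>_i\<close> exactly when
  \<open>\<pi>_i = S / n\<close>; and every \<open>\<pi>_i\<close> equals the mean \<open>S / n\<close> iff all \<open>\<pi>_i\<close> are equal.\<close>

lemma finite_set_Pi_pmf:
  fixes p :: "'a \<Rightarrow> 'b::finite pmf"
  assumes "finite A"
  shows "finite (set_pmf (Pi_pmf A dflt p))"
  using assms by (simp add: set_Pi_pmf finite_PiE_dflt)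

lemma expectation_Pi_pmf_transpose:
  fixes f :: "('a \<Rightarrow> 'b) \<Rightarrow> real"
  assumes "finite A" "i \<in> A" "j \<in> A"
  shows "measure_pmf.expectation (Pi_pmf A dflt (\<lambda>_. d)) (\<lambda>I. f (I \<circ> Transposition.transpose i j))
       = measure_pmf.expectation (Pi_pmf A dflt (\<lambda>_. d)) f"
proof -
  have "Pi_pmf A dflt (\<lambda>_. d) = map_pmf (\<lambda>I. I \<circ> Transposition.transpose i j) (Pi_pmf A dflt (\<lambda>_. d))"
    by (rule Pi_pmf_bij_betw) (use assms in \<open>auto simp: Transposition.transpose_def\<close>)
  then show ?thesis
    by (metis integral_map_pmf)
qed

lemma all_eq_mean_iff_all_eq:
  fixes \<pi> :: "nat \<Rightarrow> real"
  shows "(\<forall>i<n. \<pi> i = (\<Sum>j<n. \<pi> j) / n) \<longleftrightarrow> (\<forall>i<n. \<forall>j<n. \<pi> i = \<pi> j)"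
proof
  assume mean: "\<forall>i<n. \<pi> i = (\<Sum>j<n. \<pi> j) / n"
  show "\<forall>i<n. \<forall>j<n. \<pi> i = \<pi> j"
  proof (intro allI impI)
    fix i j assume "i < n" "j < n"
    show "\<pi> i = \<pi> j"
      by (rule trans[OF mean[rule_format, OF \<open>i < n\<close>] mean[rule_format, OF \<open>j < n\<close>, symmetric]])
  qed
next
  assume eq: "\<forall>i<n. \<forall>j<n. \<pi> i = \<pi> j"
  show "\<forall>i<n. \<pi> i = (\<Sum>j<n. \<pi> j) / n"
  proof (intro allI impI)
    fix i assume "i < n"
    have "(\<Sum>j<n. \<pi> j) = (\<Sum>j<n. \<pi> i)"
      using eq \<open>i < n\<close> by (intro sum.cong refl) blast
    with \<open>i < n\<close> show "\<pi> i = (\<Sum>j<n. \<pi> j) / n"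
      by simp
  qed
qed

lemma fair_iff_eq_mean:
  fixes S x r n :: real
  assumes "0 < n" "r < 1"
  shows "S * (1 - r) / n + x * r = x \<longleftrightarrow> x = S / n"
proof -
  have "S * (1 - r) / n + x * r = x \<longleftrightarrow> S * (1 - r) = (x * n) * (1 - r)"
    using assms by (simp add: field_simps)
  also have "\<dots> \<longleftrightarrow> S = x * n"
    using assms by simp
  also have "\<dots> \<longleftrightarrow> x = S / n"
    using assms by (auto simp: field_simps)
  finally show ?thesis .
qed

lemma tontine_Ilast_eq: "tontine_Ilast n I = (if \<exists>j<n. I j then 0 else 1)"
  unfolding tontine_Ilast_def by auto

lemma tontine_denominator_pos: "(\<Sum>j<n. of_bool (I j)) + tontine_Ilast n I > (0::real)"
proof (cases "\<exists>j<n. I j")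
  case True
  then obtain j where "j < n" "I j"
    by auto
  then have "(1::real) \<le> (\<Sum>j<n. of_bool (I j))"
    using member_le_sum[of j "{..<n}" "\<lambda>j. of_bool (I j) :: real"] by simp
  then show ?thesis
    by (simp add: tontine_Ilast_eq)
next
  case False
  then show ?thesis
    by (simp add: tontine_Ilast_eq)
qed

lemma tontine_P_last: "tontine_P n I n = tontine_Ilast n I"
  by (cases "\<exists>j<n. I j") (auto simp: tontine_P_def tontine_Ilast_eq)

lemma tontine_P_sum: "(\<Sum>i<n. tontine_P n I i) + tontine_P n I n = 1"
proof -
  define N :: real where "N = (\<Sum>j<n. of_bool (I j)) + tontine_Ilast n I"
  have "(\<Sum>i<n. tontine_P n I i) = (\<Sum>i<n. of_bool (I i)) / N"
    unfolding sum_divide_distrib by (rule sum.cong) (auto simp: tontine_P_def N_def)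
  moreover have "tontine_P n I n = tontine_Ilast n I / N"
    by (simp add: tontine_P_def N_def)
  ultimately have "(\<Sum>i<n. tontine_P n I i) + tontine_P n I n = N / N"
    by (simp only: N_def add_divide_distrib)
  also have "\<dots> = 1"
    using tontine_denominator_pos[where n = n and I = I] by (simp add: N_def)
  finally show ?thesis .
qed

lemma tontine_P_transpose:
  assumes "i < n" "j < n"
  shows "tontine_P n (I \<circ> Transposition.transpose i j) i = tontine_P n I j"
proof -
  have bij: "bij_betw (Transposition.transpose i j) {..<n} {..<n}"
    using assms by simp
  have "(\<Sum>k<n. of_bool ((I \<circ> Transposition.transpose i j) k) :: real) = (\<Sum>k<n. of_bool (I k))"
    unfolding comp_def by (rule sum.reindex_bij_betw[OF bij])
  moreover have "tontine_Ilast n (I \<circ> Transposition.transpose i j) = tontine_Ilast n I"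
    unfolding tontine_Ilast_def comp_def by (rule prod.reindex_bij_betw[OF bij])
  ultimately show ?thesis
    using assms by (simp add: tontine_P_def)
qed

context
  fixes n :: nat and p :: real
  assumes p: "0 \<le> p" "p \<le> 1"
begin

abbreviation tontine_pmf :: "(nat \<Rightarrow> bool) pmf" where
  "tontine_pmf \<equiv> Pi_pmf {..<n} False (\<lambda>_. bernoulli_pmf p)"

lemma integrable_tontine_pmf: "integrable (measure_pmf tontine_pmf) (f :: _ \<Rightarrow> real)"
  by (rule integrable_measure_pmf_finite) (simp add: finite_set_Pi_pmf)

lemma expectation_tontine_P_last:
  "measure_pmf.expectation tontine_pmf (\<lambda>I. tontine_P n I n) = (1 - p) ^ n"
proof -
  have "measure_pmf.expectation tontine_pmf (\<lambda>I. tontine_P n I n)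
      = measure_pmf.expectation tontine_pmf (\<lambda>I. \<Prod>j<n. (\<lambda>_ b. 1 - of_bool b) j (I j))"
    by (simp add: tontine_P_last tontine_Ilast_def)
  also have "\<dots> = (\<Prod>j<n. measure_pmf.expectation (bernoulli_pmf p) (\<lambda>b. 1 - of_bool b))"
    by (rule expectation_prod_Pi_pmf) (auto intro: integrable_measure_pmf_finite)
  also have "\<dots> = (1 - p) ^ n"
    using p by simp
  finally show ?thesis .
qed

lemma expectation_tontine_P:
  assumes "i < n"
  shows "measure_pmf.expectation tontine_pmf (\<lambda>I. tontine_P n I i) = (1 - (1 - p) ^ n) / n"
proof -
  define c where "c = measure_pmf.expectation tontine_pmf (\<lambda>I. tontine_P n I i)"
  have c: "measure_pmf.expectation tontine_pmf (\<lambda>I. tontine_P n I j) = c" if "j < n" for j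
    using expectation_Pi_pmf_transpose[of "{..<n}" j i _ _ "\<lambda>I. tontine_P n I j"]
      tontine_P_transpose[OF that \<open>i < n\<close>] that assms
    by (simp add: c_def)
  have "1 = measure_pmf.expectation tontine_pmf (\<lambda>I. (\<Sum>j<n. tontine_P n I j) + tontine_P n I n)"
    by (simp add: tontine_P_sum)
  also have "\<dots> = (\<Sum>j<n. measure_pmf.expectation tontine_pmf (\<lambda>I. tontine_P n I j)) + (1 - p) ^ n"
    by (simp add: integrable_tontine_pmf expectation_tontine_P_last)
  also have "\<dots> = n * c + (1 - p) ^ n"
    using c by simp
  finally show ?thesis
    using assms by (simp add: c_def field_simps)
qed

lemma expectation_tontine_W:
  assumes "i < n"
  shows "measure_pmf.expectation tontine_pmf (\<lambda>I. tontine_W n \<pi> I i)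
       = (\<Sum>j<n. \<pi> j) * (1 - (1 - p) ^ n) / n + \<pi> i * (1 - p) ^ n"
  unfolding tontine_W_def
  by (simp add: integrable_tontine_pmf expectation_tontine_P[OF assms] expectation_tontine_P_last)

end

theorem mainTheorem13:
  fixes n :: nat and q :: real and \<pi> :: "nat \<Rightarrow> real"
  assumes "0 < q" and "q < 1"
    and "\<forall>i<n. 0 \<le> \<pi> i" and "\<exists>i<n. 0 < \<pi> i"
  shows "(\<forall>i<n. measure_pmf.expectation (Pi_pmf {..<n} False (\<lambda>_. bernoulli_pmf (1 - q)))
              (\<lambda>I. tontine_W n \<pi> I i) = \<pi> i)
         \<longleftrightarrow> (\<forall>i<n. \<forall>j<n. \<pi> i = \<pi> j)"
proof -
  have "0 < n"
    using assms(4) by auto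
  then have "q ^ n < 1"
    using assms(1,2) by (simp add: power_less_one_iff)
  moreover have "measure_pmf.expectation (Pi_pmf {..<n} False (\<lambda>_. bernoulli_pmf (1 - q)))
      (\<lambda>I. tontine_W n \<pi> I i) = (\<Sum>j<n. \<pi> j) * (1 - q ^ n) / n + \<pi> i * q ^ n" if "i < n" for i
    using expectation_tontine_W[of "1 - q" i n \<pi>] assms(1,2) that by simp
  ultimately show ?thesis
    using fair_iff_eq_mean[of "real n"] \<open>0 < n\<close> all_eq_mean_iff_all_eq[of n \<pi>] by simp
qed

end
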